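(* Let $\pi$ be a policy for a CPOSMDP with vector cost $\mathbf{C}$, discount $\gamma\in(0,1)$, initial belief $b_0$ and global budget $\hat{\mathbf{c}}$, which operates as follows: at every decision epoch $e$ (starting at time $t_{e-1}$, with $t_0=0$, in belief $b_e$, with accumulated discounted cost $\tilde{\mathbf{c}}_{e-1}$, $\tilde{\mathbf{c}}_0=\mathbf{0}$) it assigns the epoch budget $\hat{\mathbf{c}}_e=\frac{\hat{\mathbf{c}}-\tilde{\mathbf{c}}_{e-1}}{\gamma^{t_{e-1}}}$ and selects an option $\hat a_e$. Suppose that $\hat{\mathbf{c}}_e\ge\mathbf{0}$ for all $e$ and that every selected option is locally feasible, i.e. $\mathbf{Q}^\pi_{\mathbf{C}}(b_e,\hat a_e)\le\hat{\mathbf{c}}_e$ for all $e$. Then $\pi$ is globally feasible: $\mathbf{V}^\pi_{\mathbf{C}}(b_0)\le\hat{\mathbf{c}}$.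
   Context: Setting: a constrained POMDP whose decisions are made over options (temporally extended actions), i.e. a CPOSMDP, with beliefs $b$, primitive actions $a$, vector cost $\mathbf{C}(b,a)$, discount $\gamma\in(0,1)$, global constraint vector $\hat{\mathbf{c}}$; vector inequalities are componentwise. Decision epoch $e$ is the time at which the $e$-th option is selected; it starts at time $t_{e-1}$ in belief $b_e$ (so $b_1=b_0$ at $t_0=0$). Accumulated discounted cost: $\tilde{\mathbf{c}}_{e-1}=\sum_{j<t_{e-1}}\gamma^j\mathbf{C}(b_j,a_j)$. Cost Q-function: $\mathbf{Q}^\pi_{\mathbf{C}}(b,\hat a)=\mathbb{E}\big[\sum_{i=0}^\infty\gamma^i\mathbf{C}(b'_i,a'_i)\mid b'_0=b,\ a'_0=\hat a,\ \pi\big]$. Cost value function: $\mathbf{V}^\pi_{\mathbf{C}}(b_0)=\mathbb{E}\big[\sum_{t=0}^\infty\gamma^t\mathbf{C}(b_t,a_t)\mid b_0,\pi\big]$. A policy is globally feasible if $\mathbf{V}^\pi_{\mathbf{C}}(b_0)\le\hat{\mathbf{c}}$. An option $\hat a_e$ is locally feasible for budget $\hat{\mathbf{c}}_e$ if $\mathbf{Q}^\pi_{\mathbf{C}}(b_e,\hat a_e)\le\hat{\mathbf{c}}_e$. *)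

theory Defs
  imports "HOL-Probability.Probability"
begin

text \<open>A constrained POMDP over options (CPOSMDP), rendered on the belief level.
  A vector cost is a function 'k => real, compared componentwise.
  Options are Markov options: an intra-option action distribution and a
  termination distribution evaluated at the successor belief.\<close>

record ('b, 'a, 'o, 'k) cposmdp =
  cost     :: "'b \<Rightarrow> 'a \<Rightarrow> 'k \<Rightarrow> real"
  disc     :: real
  trans    :: "'b \<Rightarrow> 'a \<Rightarrow> 'b pmf"
  opt_act  :: "'o \<Rightarrow> 'b \<Rightarrow> 'a pmf"
  opt_stop :: "'o \<Rightarrow> 'b \<Rightarrow> bool pmf"

text \<open>Being history dependent, it may use the epoch budget,
  which is a function of the history.\<close>

type_synonym ('b, 'a, 'o) opolicy = "('b \<times> 'a) list \<Rightarrow> 'b \<Rightarrow> 'o pmf"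

primrec fin_cost ::
  "('b, 'a, 'o, 'k) cposmdp \<Rightarrow> ('b, 'a, 'o) opolicy \<Rightarrow> nat \<Rightarrow>
   ('b \<times> 'a) list \<Rightarrow> 'b \<Rightarrow> 'o \<Rightarrow> 'k \<Rightarrow> real" where
  "fin_cost M pol 0 = (\<lambda>h b w k. 0)"
| "fin_cost M pol (Suc n) = (\<lambda>h b w k.
     measure_pmf.expectation (opt_act M w b) (\<lambda>a.
       cost M b a k + disc M *
       measure_pmf.expectation (trans M b a) (\<lambda>b'.
         measure_pmf.expectation (opt_stop M w b') (\<lambda>st.
           if st then measure_pmf.expectation (pol (h @ [(b, a)]) b')
                         (\<lambda>w'. fin_cost M pol n (h @ [(b, a)]) b' w' k)
           else fin_cost M pol n (h @ [(b, a)]) b' w k))))"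

definition cost_Q ::
  "('b, 'a, 'o, 'k) cposmdp \<Rightarrow> ('b, 'a, 'o) opolicy \<Rightarrow>
   ('b \<times> 'a) list \<Rightarrow> 'b \<Rightarrow> 'o \<Rightarrow> 'k \<Rightarrow> real" where
  "cost_Q M pol h b w k = lim (\<lambda>n. fin_cost M pol n h b w k)"

definition cost_V ::
  "('b, 'a, 'o, 'k) cposmdp \<Rightarrow> ('b, 'a, 'o) opolicy \<Rightarrow> 'b \<Rightarrow> 'k \<Rightarrow> real" where
  "cost_V M pol b0 k = measure_pmf.expectation (pol [] b0) (\<lambda>w. cost_Q M pol [] b0 w k)"

text \<open>Reachable configurations (history, current belief, current option);
  the flag is True iff the configuration is the start of a decision epoch,
  i.e. the option has just been selected by the policy.\<close>

inductive reachable ::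
  "('b, 'a, 'o, 'k) cposmdp \<Rightarrow> ('b, 'a, 'o) opolicy \<Rightarrow> 'b \<Rightarrow>
   bool \<Rightarrow> ('b \<times> 'a) list \<Rightarrow> 'b \<Rightarrow> 'o \<Rightarrow> bool"
  for M pol b0 where
  init: "w \<in> set_pmf (pol [] b0) \<Longrightarrow> reachable M pol b0 True [] b0 w"
| select: "reachable M pol b0 f h b w \<Longrightarrow> a \<in> set_pmf (opt_act M w b) \<Longrightarrow>
     b' \<in> set_pmf (trans M b a) \<Longrightarrow> True \<in> set_pmf (opt_stop M w b') \<Longrightarrow>
     w' \<in> set_pmf (pol (h @ [(b, a)]) b') \<Longrightarrow>
     reachable M pol b0 True (h @ [(b, a)]) b' w'"
| continue: "reachable M pol b0 f h b w \<Longrightarrow> a \<in> set_pmf (opt_act M w b) \<Longrightarrow>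
     b' \<in> set_pmf (trans M b a) \<Longrightarrow> False \<in> set_pmf (opt_stop M w b') \<Longrightarrow>
     reachable M pol b0 False (h @ [(b, a)]) b' w"

text \<open>Accumulated discounted cost of a history (time t = length h).\<close>

definition acc_cost :: "('b, 'a, 'o, 'k) cposmdp \<Rightarrow> ('b \<times> 'a) list \<Rightarrow> 'k \<Rightarrow> real" where
  "acc_cost M h k = (\<Sum>j<length h. disc M ^ j * cost M (fst (h ! j)) (snd (h ! j)) k)"

definition epoch_budget ::
  "('b, 'a, 'o, 'k) cposmdp \<Rightarrow> ('k \<Rightarrow> real) \<Rightarrow> ('b \<times> 'a) list \<Rightarrow> 'k \<Rightarrow> real" where
  "epoch_budget M chat h k = (chat k - acc_cost M h k) / disc M ^ length h"

end

theory Submission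
  imports Defs
begin

text \<open>The value of the policy at \<open>b\<^sub>0\<close> is the average of the cost Q-function over
  the first option. The first epoch starts at time 0 with no accumulated cost,
  so its budget is the global budget itself, and local feasibility of every
  possible first option bounds that average by it.\<close>

text \<open>The hypothesis \<open>0 \<le> c\<close> covers the case of a non-integrable \<open>f\<close>, whose
  expectation is 0 by convention.\<close>

lemma pmf_expectation_le_const:
  fixes f :: "'a \<Rightarrow> real"
  assumes "0 \<le> c" and "\<And>x. x \<in> set_pmf p \<Longrightarrow> f x \<le> c"
  shows "measure_pmf.expectation p f \<le> c"
proof (cases "integrable (measure_pmf p) f")
  case True
  moreover have "AE x in measure_pmf p. f x \<le> c"
    using assms(2) by (simp add: AE_measure_pmf_iff)
  ultimately show ?thesis
    by (rule measure_pmf.integral_le_const)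
next
  case False
  then show ?thesis
    using assms(1) by (simp add: not_integrable_integral_eq)
qed

lemma epoch_budget_Nil [simp]: "epoch_budget M chat [] k = chat k"
  by (simp add: epoch_budget_def acc_cost_def)

theorem mainTheorem2:
  fixes M :: "('b, 'a, 'o, 'k::finite) cposmdp"
    and pol :: "('b, 'a, 'o) opolicy"
    and b0 :: 'b
    and chat :: "'k \<Rightarrow> real"
  assumes "0 < disc M" and "disc M < 1"
    and "\<exists>B. \<forall>b a k. \<bar>cost M b a k\<bar> \<le> B"
    and "\<forall>h b w k. reachable M pol b0 True h b w \<longrightarrow> 0 \<le> epoch_budget M chat h k"
    and "\<forall>h b w k. reachable M pol b0 True h b w \<longrightarrow>
           cost_Q M pol h b w k \<le> epoch_budget M chat h k"
  shows "\<forall>k. cost_V M pol b0 k \<le> chat k"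
proof
  fix k
  have first_epoch: "reachable M pol b0 True [] b0 w" if "w \<in> set_pmf (pol [] b0)" for w
    using that by (rule reachable.init)
  obtain w0 where "w0 \<in> set_pmf (pol [] b0)"
    using set_pmf_not_empty by fast
  then have "0 \<le> epoch_budget M chat [] k"
    using assms(4) first_epoch by blast
  moreover have "cost_Q M pol [] b0 w k \<le> epoch_budget M chat [] k"
    if "w \<in> set_pmf (pol [] b0)" for w
    using assms(5) first_epoch[OF that] by blast
  ultimately show "cost_V M pol b0 k \<le> chat k"
    unfolding cost_V_def epoch_budget_Nil by (rule pmf_expectation_le_const)
qed

end
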